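(* Let $\lambda_1,\dots,\lambda_n$ be positive integers, $L=\mathrm{lcm}(\lambda_1,\dots,\lambda_n)$, and $\Lambda=\langle1/\lambda_1,\dots,1/\lambda_n\rangle$ the additive submonoid of $\mathbb{Q}_{\ge}$ they generate. If $\Lambda$ is quasinormal, then $1+1/L\in\Lambda$.
   Context: A submonoid $S$ of $\mathbb{Q}_{\ge}$ is quasinormal if whenever $x\in S$ and $x\ge p$ for a positive integer $p$, there exist $y_1,\dots,y_p\in S$ with $y_i\ge1$ for all $i$ and $x=y_1+\cdots+y_p$. *)

theory Defs
  imports Main "HOL.Rat"
begin

definition gen_monoid :: "nat \<Rightarrow> (nat \<Rightarrow> nat) \<Rightarrow> rat set" where
  "gen_monoid n lam = {(\<Sum>i<n. of_nat (c i) / of_nat (lam i)) | c :: nat \<Rightarrow> nat. True}"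

definition quasinormal :: "rat set \<Rightarrow> bool" where
  "quasinormal S \<longleftrightarrow>
     (\<forall>x\<in>S. \<forall>p::nat. p > 0 \<and> x \<ge> of_nat p \<longrightarrow>
        (\<exists>y :: nat \<Rightarrow> rat. (\<forall>i<p. y i \<in> S \<and> y i \<ge> 1) \<and> x = (\<Sum>i<p. y i)))"

end

theory Submission
  imports Defs "HOL-Computational_Algebra.Euclidean_Algorithm" "HOL-Number_Theory.Cong"
begin

(* With L = lcm lambda_i, every element of the monoid lies in (1/L) N, and since the numbers
   L / lambda_i have gcd 1, Bezout gives an element p + 1/L with p >= 1.  Quasinormality splits
   it into p summands y_j >= 1 of the monoid; the excesses L y_j - L are natural numbers summing
   to 1, so one summand is exactly 1 + 1/L. *)

lemma Gcd_image_eq_linear_combination: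
  fixes a :: "'i \<Rightarrow> 'a :: euclidean_ring_gcd"
  assumes "finite I"
  shows "\<exists>z. (\<Sum>i\<in>I. z i * a i) = Gcd (a ` I)"
  using assms
proof (induction I rule: finite_induct)
  case empty
  then show ?case by simp
next
  case (insert j I)
  then obtain z where z: "(\<Sum>i\<in>I. z i * a i) = Gcd (a ` I)" by blast
  define u where "u = fst (bezout_coefficients (a j) (Gcd (a ` I)))"
  define v where "v = snd (bezout_coefficients (a j) (Gcd (a ` I)))"
  have "(\<Sum>i\<in>insert j I. ((\<lambda>i. v * z i)(j := u)) i * a i) = u * a j + v * (\<Sum>i\<in>I. z i * a i)"
    using insert.hyps by (auto simp: sum_distrib_left mult.assoc intro!: sum.cong)
  also have "\<dots> = Gcd (a ` insert j I)"
    using bezout_coefficients_fst_snd[of "a j" "Gcd (a ` I)"] by (simp add: z u_def v_def)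
  finally show ?case by blast
qed

lemma Gcd_Lcm_div_eq_1:
  fixes A :: "nat set"
  assumes "finite A" "A \<noteq> {}" "0 \<notin> A"
  shows "Gcd ((\<lambda>d. Lcm A div d) ` A) = 1"
proof -
  define L where "L = Lcm A"
  define g where "g = Gcd ((\<lambda>d. L div d) ` A)"
  have "L \<noteq> 0"
    using assms unfolding L_def by simp
  have d_dvd_L: "d dvd L" if "d \<in> A" for d
    unfolding L_def using that by (simp add: dvd_Lcm)
  have g_times_dvd: "g * d dvd L" if "d \<in> A" for d
  proof -
    have "g dvd L div d"
      unfolding g_def using that by (simp add: Gcd_dvd)
    moreover have "d \<noteq> 0"
      using that assms(3) by metis
    ultimately show ?thesis
      using d_dvd_L[OF that] by (simp add: dvd_div_iff_mult)
  qed
  obtain d\<^sub>0 where "d\<^sub>0 \<in> A"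
    using assms(2) by blast
  then have "g dvd L" "g \<noteq> 0"
    using g_times_dvd[of d\<^sub>0] \<open>L \<noteq> 0\<close> by (auto dest: dvd_mult_left)
  have "d dvd L div g" if "d \<in> A" for d
    using g_times_dvd[OF that] \<open>g \<noteq> 0\<close> \<open>g dvd L\<close> by (simp add: dvd_div_iff_mult mult.commute)
  then have "L dvd L div g"
    unfolding L_def by (simp add: Lcm_least)
  moreover have "L div g \<noteq> 0"
    using \<open>g dvd L\<close> \<open>g \<noteq> 0\<close> \<open>L \<noteq> 0\<close> by (simp add: dvd_div_eq_0_iff)
  ultimately have "L \<le> L div g"
    by (simp add: dvd_imp_le)
  then have "g = 1"
    using \<open>L \<noteq> 0\<close> div_eq_dividend_iff div_le_dividend le_antisym by blast
  then show ?thesis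
    unfolding g_def L_def .
qed

lemma Lcm_image_lessThan_pos:
  fixes lam :: "nat \<Rightarrow> nat"
  assumes "\<forall>i<n. lam i > 0"
  shows "Lcm (lam ` {..<n}) > 0"
proof -
  have "0 \<notin> lam ` {..<n}"
    using assms by auto
  then show ?thesis
    by (intro gr0I) simp
qed

lemma mem_gen_monoid_iff:
  "x \<in> gen_monoid n lam \<longleftrightarrow> (\<exists>c. x = (\<Sum>i<n. of_nat (c i) / of_nat (lam i)))"
  by (simp add: gen_monoid_def)

lemma gen_monoid_add:
  assumes "x \<in> gen_monoid n lam" "y \<in> gen_monoid n lam"
  shows "x + y \<in> gen_monoid n lam"
proof -
  obtain c d where "x = (\<Sum>i<n. of_nat (c i) / of_nat (lam i))" "y = (\<Sum>i<n. of_nat (d i) / of_nat (lam i))"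
    using assms unfolding mem_gen_monoid_iff by blast
  then have "x + y = (\<Sum>i<n. of_nat (c i + d i) / of_nat (lam i))"
    by (simp add: sum.distrib add_divide_distrib)
  then show ?thesis
    unfolding mem_gen_monoid_iff by (rule exI[of _ "\<lambda>i. c i + d i"])
qed

lemma of_nat_mem_gen_monoid:
  assumes "i < n" "lam i > 0"
  shows "of_nat k \<in> gen_monoid n lam"
proof -
  have "(\<Sum>j<n. of_nat (if j = i then k * lam i else 0) / of_nat (lam j)) = (of_nat k :: rat)"
    using assms by (simp add: if_distrib[of of_nat] if_distrib[of "\<lambda>x. x / _"] cong: if_cong)
  then show ?thesis
    unfolding mem_gen_monoid_iff by (metis (no_types))
qed

lemma sum_of_nat_div_times_common_multiple:
  assumes "\<forall>i\<in>I. lam i dvd L"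
  shows "(\<Sum>i\<in>I. of_nat (c i) / of_nat (lam i)) * of_nat L
           = (of_nat (\<Sum>i\<in>I. c i * (L div lam i)) :: 'a :: field_char_0)"
  unfolding sum_distrib_right of_nat_sum
proof (rule sum.cong)
  fix i assume "i \<in> I"
  then obtain q where "L = lam i * q"
    using assms by blast
  then show "of_nat (c i) / of_nat (lam i) * of_nat L = (of_nat (c i * (L div lam i)) :: 'a)"
    by (cases "lam i = 0") simp_all
qed simp

lemma gen_monoid_times_Lcm_in_Nats:
  assumes "y \<in> gen_monoid n lam"
  shows "y * of_nat (Lcm (lam ` {..<n})) \<in> \<nat>"
proof -
  obtain c where "y = (\<Sum>i<n. of_nat (c i) / of_nat (lam i))"
    using assms unfolding mem_gen_monoid_iff by blast
  then have "y * of_nat (Lcm (lam ` {..<n})) = of_nat (\<Sum>i<n. c i * (Lcm (lam ` {..<n}) div lam i))"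
    by (simp add: sum_of_nat_div_times_common_multiple dvd_Lcm del: of_nat_sum)
  then show ?thesis
    by (simp only: of_nat_in_Nats)
qed

lemma ex_gen_monoid_numerator_cong_1:
  fixes n :: nat and lam :: "nat \<Rightarrow> nat"
  defines "L \<equiv> Lcm (lam ` {..<n})"
  assumes "n \<ge> 1" "\<forall>i<n. lam i > 0"
  shows "\<exists>T. of_nat T / of_nat L \<in> gen_monoid n lam \<and> [T = 1] (mod L)"
proof -
  define a where "a i = L div lam i" for i
  have "0 \<notin> lam ` {..<n}"
    using assms(3) by auto
  have "L \<noteq> 0"
    using Lcm_image_lessThan_pos[OF assms(3)] unfolding L_def by (rule gr_implies_not0)
  have "(\<lambda>i. int (a i)) ` {..<n} = int ` (\<lambda>d. L div d) ` lam ` {..<n}"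
    unfolding a_def by (simp add: image_image)
  also have "Gcd \<dots> = 1"
    using Gcd_Lcm_div_eq_1[of "lam ` {..<n}"] \<open>0 \<notin> lam ` {..<n}\<close> assms(2)
    unfolding L_def by fastforce
  finally obtain z where z: "(\<Sum>i<n. z i * int (a i)) = 1"
    using Gcd_image_eq_linear_combination[of "{..<n}" "\<lambda>i. int (a i)"] by auto
  define c where "c i = nat (z i mod int L)" for i
  define T where "T = (\<Sum>i<n. c i * a i)"
  have "int T = (\<Sum>i<n. (z i mod int L) * int (a i))"
    using \<open>L \<noteq> 0\<close> unfolding T_def c_def by simp
  also have "[\<dots> = (\<Sum>i<n. z i * int (a i))] (mod int L)"
    by (intro cong_sum cong_scalar_right) simp
  finally have "[T = 1] (mod L)"
    using z cong_int_iff[of T 1 L] by simp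
  have "(\<Sum>i<n. of_nat (c i) / of_nat (lam i)) * of_nat L = (of_nat T :: rat)"
    unfolding T_def a_def L_def
    by (simp add: sum_of_nat_div_times_common_multiple dvd_Lcm del: of_nat_sum)
  then have "of_nat T / of_nat L = (\<Sum>i<n. of_nat (c i) / of_nat (lam i) :: rat)"
    using \<open>L \<noteq> 0\<close> by (simp add: field_simps)
  with \<open>[T = 1] (mod L)\<close> show ?thesis
    unfolding mem_gen_monoid_iff by blast
qed

lemma ex_gen_monoid_nat_plus_inverse_Lcm:
  fixes n :: nat and lam :: "nat \<Rightarrow> nat"
  defines "L \<equiv> Lcm (lam ` {..<n})"
  assumes "n \<ge> 1" "\<forall>i<n. lam i > 0"
  shows "\<exists>p>0. of_nat p + 1 / of_nat L \<in> gen_monoid n lam"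
proof -
  obtain T where T: "of_nat T / of_nat L \<in> gen_monoid n lam" "[T = 1] (mod L)"
    using ex_gen_monoid_numerator_cong_1[OF assms(2,3)] unfolding L_def by blast
  have "L \<noteq> 0"
    using Lcm_image_lessThan_pos[OF assms(3)] unfolding L_def by (rule gr_implies_not0)
  \<comment> \<open>Adding 2 rather than 1 makes the integer part positive also when L = 1.\<close>
  have "[T + 2 * L = 1] (mod L)"
    using T(2) by (simp add: cong_def)
  then obtain p where p: "T + 2 * L = p * L + 1"
    using cong_le_nat[of 1 "T + 2 * L" L] \<open>L \<noteq> 0\<close> by auto
  then have "p > 0"
    using \<open>L \<noteq> 0\<close> by (cases p) auto
  have "2 \<in> gen_monoid n lam"
    using of_nat_mem_gen_monoid[of 0 n lam 2] assms(2,3) by simp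
  then have "of_nat T / of_nat L + 2 \<in> gen_monoid n lam"
    using T(1) by (rule gen_monoid_add[rotated])
  moreover have "of_nat T / of_nat L + 2 = of_nat p + 1 / (of_nat L :: rat)"
  proof -
    have "(of_nat T + 2 * of_nat L :: rat) = of_nat p * of_nat L + 1"
      using arg_cong[OF p, of rat_of_nat] by simp
    then show ?thesis
      using \<open>L \<noteq> 0\<close> by (simp add: field_simps)
  qed
  ultimately show ?thesis
    using \<open>p > 0\<close> by auto
qed

lemma quasinormal_one_plus_inverse_mem:
  fixes S :: "rat set"
  assumes "quasinormal S" "\<forall>y\<in>S. y * of_nat L \<in> \<nat>" "L > 0"
    and "p > 0" "of_nat p + 1 / of_nat L \<in> S"
  shows "1 + 1 / of_nat L \<in> S"
proof -
  have "of_nat p \<le> of_nat p + 1 / (of_nat L :: rat)"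
    by simp
  then obtain y where y: "\<forall>i<p. y i \<in> S \<and> y i \<ge> 1" and sum_y: "of_nat p + 1 / of_nat L = (\<Sum>i<p. y i)"
    using assms(1,4,5) unfolding quasinormal_def by blast
  have "\<exists>m. y i * of_nat L = of_nat m" if "i < p" for i
    using assms(2) y that by (blast elim: Nats_cases)
  then obtain N where N: "\<forall>i<p. y i * of_nat L = of_nat (N i)"
    by metis
  have N_ge_L: "L \<le> N i" if "i < p" for i
  proof -
    have "1 * of_nat L \<le> y i * of_nat L"
      using y that by (intro mult_right_mono) auto
    then show ?thesis
      using N that by simp
  qed
  have "of_nat (\<Sum>i<p. N i - L) = (\<Sum>i<p. y i * of_nat L - of_nat L :: rat)"
    using N N_ge_L by (simp add: of_nat_diff)
  also have "\<dots> = (of_nat p + 1 / of_nat L) * of_nat L - of_nat p * of_nat L"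
    unfolding sum_y by (simp add: sum_subtractf sum_distrib_right)
  also have "\<dots> = 1"
    using assms(3) by (simp add: field_simps)
  finally have "(\<Sum>i<p. N i - L) = 1"
    by (simp only: of_nat_eq_1_iff)
  then obtain i where i: "i < p" "N i - L = 1"
    using sum_eq_1_iff[of "{..<p}" "\<lambda>i. N i - L"] by auto
  then have "N i = L + 1"
    using N_ge_L by fastforce
  then have "y i * of_nat L = of_nat L + 1"
    using N i by simp
  then have "y i = 1 + 1 / of_nat L"
    using assms(3) by (simp add: field_simps)
  then show ?thesis
    using y i by auto
qed

theorem proposition4p8:
  fixes n :: nat and lam :: "nat \<Rightarrow> nat"
  assumes "n \<ge> 1"
    and "\<forall>i<n. lam i > 0"
    and "quasinormal (gen_monoid n lam)"
  shows "1 + 1 / of_nat (Lcm (lam ` {..<n})) \<in> gen_monoid n lam"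
proof -
  obtain p where "p > 0" "of_nat p + 1 / of_nat (Lcm (lam ` {..<n})) \<in> gen_monoid n lam"
    using ex_gen_monoid_nat_plus_inverse_Lcm[OF assms(1,2)] by blast
  then show ?thesis
    using quasinormal_one_plus_inverse_mem[OF assms(3)] gen_monoid_times_Lcm_in_Nats
      Lcm_image_lessThan_pos[OF assms(2)] by blast
qed

end
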